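(* Consider the SR2 method (described in the context) applied to $\min_x F(x) := f(x) + \mathcal{R}(x)$, and suppose Assumptions (A1), (A3) and (A5) of the context hold. Let $\sigma_{\textup{succ}} := \max\big(2\kappa_m/(1-\eta_2),\, 1/\lambda\big)$, where $\kappa_m$ is the constant of (A3) and $\lambda$ the constant of (A5). If at some iteration $t$ the computed step satisfies $s_t \neq 0$ and $\sigma_t \geq \sigma_{\textup{succ}}$, then $s_t$ is accepted (i.e. $x_{t+1} = x_t + s_t$) and $\sigma_{t+1} \leq \sigma_t$.
   Context: Problem: $F(x) = f(x) + \mathcal{R}(x)$ with $f(x) = \frac{1}{N}\sum_{i=1}^N f_i(x)$, $f_i:\mathbb{R}^n\to\mathbb{R}$ differentiable, and $\mathcal{R}:\mathbb{R}^n \to \mathbb{R}\cup\{\pm\infty\}$. For a nonempty sample $\xi \subseteq \{1,\dots,N\}$ set $f(x,\xi) := \frac{1}{|\xi|}\sum_{j\in\xi} f_j(x)$ and $\nabla f(x,\xi) := \frac{1}{|\xi|}\sum_{j\in\xi}\nabla f_j(x)$. A function $\mathcal{R}$ is proper if it never equals $-\infty$ and is finite somewhere; it is prox-bounded if there are $x$ and $\mu>0$ with $\inf_w \{\tfrac{1}{2}\mu^{-1}\|x-w\|^2 + \mathcal{R}(w)\} > -\infty$; the supremum of such $\mu$ is its prox-boundedness threshold. SR2 algorithm: parameters $0<\eta_1\le\eta_2<1$, $0<\gamma_3\le 1<\gamma_1\le\gamma_2$, a starting point $x_0$ where $\mathcal{R}$ is finite, $\sigma_0 \ge \sigma_{\min}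 > 0$. At iteration $t$: draw a random sample $\xi_t$, set $g_t := \nabla f(x_t,\xi_t)$, $\psi(s;x_t) := f(x_t,\xi_t) + g_t^T s + \mathcal{R}(x_t+s)$, $m(s;x_t,\sigma_t) := \psi(s;x_t) + \tfrac12\sigma_t\|s\|^2$, and compute $s_t \in \operatorname{argmin}_s m(s;x_t,\sigma_t)$ (if the sample is deemed inadequate, $s_t$ is set to $0$). Compute $\Delta F_t := F(x_t) - F(x_t+s_t)$, $\Delta\psi_t := \psi(0;x_t)-\psi(s_t;x_t)$, $\rho_t := \Delta F_t/\Delta\psi_t$ (with the convention $\rho_t = 0$ when $\Delta\psi_t = +\infty$). If $\rho_t \ge \eta_1$ (a successful iteration) set $x_{t+1} = x_t + s_t$, else $x_{t+1}=x_t$. Then choose $\sigma_{t+1} \in [\max(\sigma_{\min},\gamma_3\sigma_t),\sigma_t]$ if $\rho_t\ge\eta_2$; $\sigma_{t+1}\in[\sigma_t,\gamma_1\sigma_t]$ if $\eta_1\le\rho_t<\eta_2$; $\sigma_{t+1}\in[\gamma_1\sigma_t,\gamma_2\sigma_t]$ if $\rho_t<\eta_1$. Assumptions. (A1): there is $L>0$ with $\|\nabla f(x)-\nabla f(y)\|\le L\|x-y\|$ for all $x,y$; $\mathcal{R}$ is proper and lower semicontinuous everywhere, and $s\mapsto\mathcal{R}(x_t+s)$ is prox-bounded, with threshold $\lambda_{x_t}$, for every iterate $x_t$. (A3): there is $\kappa_m>0$ such that for all $t$, $|f(x_t+s_t)-f(x_t)-g_t^Ts_t| \le \kappa_m\|s_t\|^2$;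 moreover $\mathbb{E}_\xi[f(x_t,\xi)] = f(x_t)$ and $\mathbb{E}_\xi[g_t] = \nabla f(x_t)$. (A5): there is $\lambda>0$ with $\lambda_{x_t}\ge\lambda$ for all iterates $x_t$. *)

theory Defs
  imports "HOL-Analysis.Analysis" "HOL-Probability.Probability"
begin

definition proper_fun :: "('a \<Rightarrow> ereal) \<Rightarrow> bool" where
  "proper_fun R \<longleftrightarrow> (\<forall>x. R x \<noteq> -\<infinity>) \<and> (\<exists>x. R x \<noteq> \<infinity>)"

definition lsc_fun :: "('a::topological_space \<Rightarrow> ereal) \<Rightarrow> bool" where
  "lsc_fun R \<longleftrightarrow> (\<forall>x. R x \<le> Liminf (at x) R)"

definition prox_bounded_at :: "('a::real_normed_vector \<Rightarrow> ereal) \<Rightarrow> 'a \<Rightarrow> real \<Rightarrow> bool" where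
  "prox_bounded_at R x \<mu> \<longleftrightarrow> \<mu> > 0 \<and>
     (INF w. ereal (1/2 * inverse \<mu> * (norm (x - w))\<^sup>2) + R w) > -\<infinity>"

definition prox_bounded :: "('a::real_normed_vector \<Rightarrow> ereal) \<Rightarrow> bool" where
  "prox_bounded R \<longleftrightarrow> (\<exists>x \<mu>. prox_bounded_at R x \<mu>)"

definition prox_threshold :: "('a::real_normed_vector \<Rightarrow> ereal) \<Rightarrow> ereal" where
  "prox_threshold R = (SUP \<mu>\<in>{\<mu>. \<exists>x. prox_bounded_at R x \<mu>}. ereal \<mu>)"

definition favg :: "nat \<Rightarrow> (nat \<Rightarrow> 'a \<Rightarrow> real) \<Rightarrow> 'a \<Rightarrow> real" where
  "favg N fi x = (1 / real N) * (\<Sum>i=1..N. fi i x)"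

definition gavg :: "nat \<Rightarrow> (nat \<Rightarrow> 'a \<Rightarrow> 'a::real_vector) \<Rightarrow> 'a \<Rightarrow> 'a" where
  "gavg N gi x = (1 / real N) *\<^sub>R (\<Sum>i=1..N. gi i x)"

definition fsamp :: "(nat \<Rightarrow> 'a \<Rightarrow> real) \<Rightarrow> 'a \<Rightarrow> nat set \<Rightarrow> real" where
  "fsamp fi x \<xi> = (1 / real (card \<xi>)) * (\<Sum>j\<in>\<xi>. fi j x)"

definition gsamp :: "(nat \<Rightarrow> 'a \<Rightarrow> 'a::real_vector) \<Rightarrow> 'a \<Rightarrow> nat set \<Rightarrow> 'a" where
  "gsamp gi x \<xi> = (1 / real (card \<xi>)) *\<^sub>R (\<Sum>j\<in>\<xi>. gi j x)"

definition psi_model :: "(nat \<Rightarrow> 'a \<Rightarrow> real) \<Rightarrow> (nat \<Rightarrow> 'a \<Rightarrow> 'a::real_inner) \<Rightarrow> ('a \<Rightarrow> ereal)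
    \<Rightarrow> 'a \<Rightarrow> nat set \<Rightarrow> 'a \<Rightarrow> ereal" where
  "psi_model fi gi R x \<xi> s = ereal (fsamp fi x \<xi> + gsamp gi x \<xi> \<bullet> s) + R (x + s)"

definition m_model :: "(nat \<Rightarrow> 'a \<Rightarrow> real) \<Rightarrow> (nat \<Rightarrow> 'a \<Rightarrow> 'a::real_inner) \<Rightarrow> ('a \<Rightarrow> ereal)
    \<Rightarrow> 'a \<Rightarrow> nat set \<Rightarrow> real \<Rightarrow> 'a \<Rightarrow> ereal" where
  "m_model fi gi R x \<xi> \<sigma> s = psi_model fi gi R x \<xi> s + ereal (1/2 * \<sigma> * (norm s)\<^sup>2)"

definition Fobj :: "nat \<Rightarrow> (nat \<Rightarrow> 'a \<Rightarrow> real) \<Rightarrow> ('a \<Rightarrow> ereal) \<Rightarrow> 'a \<Rightarrow> ereal" where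
  "Fobj N fi R x = ereal (favg N fi x) + R x"

definition rho_ratio :: "ereal \<Rightarrow> ereal \<Rightarrow> ereal" where
  "rho_ratio dF dpsi = (if dpsi = \<infinity> then 0 else dF / dpsi)"

end

theory Submission
  imports Defs
begin

(* If s minimises the regularised model m = \<psi> + \<sigma>/2 |s|^2, comparing with s = 0 gives
   \<Delta>\<psi> \<ge> \<sigma>/2 |s|^2, while (A3) bounds |\<Delta>F - \<Delta>\<psi>| by \<kappa>m |s|^2 because the
   regulariser contributes identically to both decreases. Once \<sigma>(1 - \<eta>2) \<ge> 2 \<kappa>m, the model
   error is at most a (1 - \<eta>2)-fraction of \<Delta>\<psi>, so \<rho> \<ge> \<eta>2: the step is very successful. *)

lemma ratio_ge_of_quadratic_model_error:
  fixes dF dP n \<kappa> \<sigma> \<eta> :: real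
  assumes n: "0 < n" and \<sigma>: "0 < \<sigma>" and \<eta>: "\<eta> \<le> 1"
    and decrease: "\<sigma> / 2 * n \<le> dP"
    and error: "\<bar>dF - dP\<bar> \<le> \<kappa> * n"
    and large_\<sigma>: "2 * \<kappa> \<le> (1 - \<eta>) * \<sigma>"
  shows "0 < dP" "\<eta> \<le> dF / dP"
proof -
  have "0 < \<sigma> / 2 * n" using n \<sigma> by simp
  then show dP_pos: "0 < dP" using decrease by linarith
  have "2 * \<kappa> * n \<le> (1 - \<eta>) * \<sigma> * n"
    using mult_right_mono[OF large_\<sigma>] n by simp
  then have "\<kappa> * n \<le> (1 - \<eta>) * (\<sigma> / 2 * n)"
    by simp
  also have "\<dots> \<le> (1 - \<eta>) * dP"
    using mult_left_mono[OF decrease, of "1 - \<eta>"] \<eta> by simp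
  finally have "\<eta> * dP \<le> dF"
    using error by (simp add: abs_le_iff algebra_simps)
  then show "\<eta> \<le> dF / dP"
    using dP_pos by (simp add: pos_le_divide_eq)
qed

lemma regulariser_finite_of_m_model_le_zero:
  assumes "proper_fun R" "\<bar>R x\<bar> \<noteq> \<infinity>"
    and "m_model fi gi R x \<xi> \<sigma> s \<le> m_model fi gi R x \<xi> \<sigma> 0"
  shows "\<bar>R (x + s)\<bar> \<noteq> \<infinity>"
proof -
  have "R (x + s) \<noteq> \<infinity>"
    using assms(2,3) unfolding m_model_def psi_model_def by auto
  moreover have "R (x + s) \<noteq> -\<infinity>"
    using assms(1) unfolding proper_fun_def by blast
  ultimately show ?thesis by auto
qed

lemma regulariser_finite_at_iterates:
  assumes "proper_fun R" "\<bar>R (x 0)\<bar> \<noteq> \<infinity>"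
    and step: "\<And>k. s k = 0 \<or> (\<forall>s'. m_model fi gi R (x k) (\<xi> k) (\<sigma> k) (s k)
                                    \<le> m_model fi gi R (x k) (\<xi> k) (\<sigma> k) s')"
    and update: "\<And>k. x (Suc k) = x k + s k \<or> x (Suc k) = x k"
  shows "\<bar>R (x k)\<bar> \<noteq> \<infinity>"
proof (induction k)
  case 0
  then show ?case using assms(2) by simp
next
  case (Suc k)
  have "\<bar>R (x k + s k)\<bar> \<noteq> \<infinity>"
  proof (cases "s k = 0")
    case True
    then show ?thesis using Suc by simp
  next
    case False
    then have "m_model fi gi R (x k) (\<xi> k) (\<sigma> k) (s k) \<le> m_model fi gi R (x k) (\<xi> k) (\<sigma> k) 0"
      using step[of k] by blast
    then show ?thesis by (rule regulariser_finite_of_m_model_le_zero[OF assms(1) Suc])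
  qed
  then show ?case using Suc update[of k] by auto
qed

lemma rho_ratio_ge_of_model_minimiser:
  fixes R :: "'a::real_inner \<Rightarrow> ereal"
  assumes proper: "proper_fun R" and finite: "\<bar>R x\<bar> \<noteq> \<infinity>" and nonzero: "s \<noteq> 0"
    and min: "m_model fi gi R x \<xi> \<sigma> s \<le> m_model fi gi R x \<xi> \<sigma> 0"
    and error: "\<bar>favg N fi (x + s) - favg N fi x - gsamp gi x \<xi> \<bullet> s\<bar> \<le> \<kappa> * (norm s)\<^sup>2"
    and \<sigma>: "0 < \<sigma>" and \<eta>: "\<eta> \<le> 1" and large_\<sigma>: "2 * \<kappa> \<le> (1 - \<eta>) * \<sigma>"
  shows "ereal \<eta> \<le> rho_ratio (Fobj N fi R x - Fobj N fi R (x + s))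
                              (psi_model fi gi R x \<xi> 0 - psi_model fi gi R x \<xi> s)"
proof -
  obtain a where a: "R x = ereal a" using finite by (cases "R x") auto
  obtain b where b: "R (x + s) = ereal b"
    using regulariser_finite_of_m_model_le_zero[OF proper finite min] by (cases "R (x + s)") auto
  define g where "g = gsamp gi x \<xi>"
  define dF where "dF = favg N fi x + a - (favg N fi (x + s) + b)"
  define dP where "dP = a - (g \<bullet> s + b)"
  have "\<sigma> / 2 * (norm s)\<^sup>2 \<le> dP"
    using min a b unfolding m_model_def psi_model_def dP_def g_def by simp
  moreover have "\<bar>dF - dP\<bar> \<le> \<kappa> * (norm s)\<^sup>2"
    using error unfolding dF_def dP_def g_def by simp
  ultimately have "0 < dP" "\<eta> \<le> dF / dP"
    using ratio_ge_of_quadratic_model_error[of "(norm s)\<^sup>2" \<sigma> \<eta> dP dF \<kappa>] nonzero \<sigma> \<eta> large_\<sigma>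
    by auto
  moreover have "rho_ratio (Fobj N fi R x - Fobj N fi R (x + s))
                   (psi_model fi gi R x \<xi> 0 - psi_model fi gi R x \<xi> s) = ereal (dF / dP)"
    using a b \<open>0 < dP\<close>
    unfolding rho_ratio_def Fobj_def psi_model_def dF_def dP_def g_def by simp
  ultimately show ?thesis by simp
qed

theorem theorem1:
  fixes N :: nat
    and fi :: "nat \<Rightarrow> real^'n \<Rightarrow> real"
    and gi :: "nat \<Rightarrow> real^'n \<Rightarrow> real^'n"
    and R :: "real^'n \<Rightarrow> ereal"
    and L \<kappa>m lam \<eta>1 \<eta>2 \<gamma>1 \<gamma>2 \<gamma>3 \<sigma>min :: real
    and x s :: "nat \<Rightarrow> real^'n"
    and \<sigma> :: "nat \<Rightarrow> real"
    and \<xi> :: "nat \<Rightarrow> nat set"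
    and D :: "nat \<Rightarrow> nat set pmf"
    and t :: nat
  assumes N_pos: "N \<ge> 1"
    (* each f_i is differentiable with gradient gi i *)
    and grad: "\<And>i y. i \<in> {1..N} \<Longrightarrow> (fi i has_derivative (\<lambda>h. gi i y \<bullet> h)) (at y)"
    (* algorithm parameters *)
    and params: "0 < \<eta>1" "\<eta>1 \<le> \<eta>2" "\<eta>2 < 1" "0 < \<gamma>3" "\<gamma>3 \<le> 1" "1 < \<gamma>1" "\<gamma>1 \<le> \<gamma>2"
    and init: "\<bar>R (x 0)\<bar> \<noteq> \<infinity>" "\<sigma>min > 0" "\<sigma> 0 \<ge> \<sigma>min"
    (* random sampling: \<xi> t is a realisation of the sampling distribution D t *)
    and samp: "\<And>k. set_pmf (D k) \<subseteq> {A. A \<noteq> {} \<and> A \<subseteq> {1..N}}"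
    and samp_real: "\<And>k. \<xi> k \<in> set_pmf (D k)"
    (* step: a minimiser of the model, or 0 if the sample is deemed inadequate *)
    and step: "\<And>k. s k = 0 \<or>
       (\<forall>s'. m_model fi gi R (x k) (\<xi> k) (\<sigma> k) (s k) \<le> m_model fi gi R (x k) (\<xi> k) (\<sigma> k) s')"
    (* acceptance *)
    and update_x: "\<And>k. x (Suc k) =
       (if rho_ratio (Fobj N fi R (x k) - Fobj N fi R (x k + s k))
                     (psi_model fi gi R (x k) (\<xi> k) 0 - psi_model fi gi R (x k) (\<xi> k) (s k)) \<ge> ereal \<eta>1
        then x k + s k else x k)"
    (* regularisation parameter update *)
    and update_\<sigma>: "\<And>k. let \<rho> = rho_ratio (Fobj N fi R (x k) - Fobj N fi R (x k + s k))
                     (psi_model fi gi R (x k) (\<xi> k) 0 - psi_model fi gi R (x k) (\<xi> k) (s k)) in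
       (\<rho> \<ge> ereal \<eta>2 \<longrightarrow> max \<sigma>min (\<gamma>3 * \<sigma> k) \<le> \<sigma> (Suc k) \<and> \<sigma> (Suc k) \<le> \<sigma> k) \<and>
       (ereal \<eta>1 \<le> \<rho> \<and> \<rho> < ereal \<eta>2 \<longrightarrow> \<sigma> k \<le> \<sigma> (Suc k) \<and> \<sigma> (Suc k) \<le> \<gamma>1 * \<sigma> k) \<and>
       (\<rho> < ereal \<eta>1 \<longrightarrow> \<gamma>1 * \<sigma> k \<le> \<sigma> (Suc k) \<and> \<sigma> (Suc k) \<le> \<gamma>2 * \<sigma> k)"
    (* (A1) *)
    and A1_lip: "L > 0" "\<And>y z. norm (gavg N gi y - gavg N gi z) \<le> L * norm (y - z)"
    and A1_R: "proper_fun R" "lsc_fun R"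
    and A1_prox: "\<And>k. prox_bounded (\<lambda>v. R (x k + v))"
    (* (A3) *)
    and A3_pos: "\<kappa>m > 0"
    and A3_model: "\<And>k. \<bar>favg N fi (x k + s k) - favg N fi (x k) - gsamp gi (x k) (\<xi> k) \<bullet> s k\<bar>
                        \<le> \<kappa>m * (norm (s k))\<^sup>2"
    and A3_unbiased_f: "\<And>k. measure_pmf.expectation (D k) (\<lambda>A. fsamp fi (x k) A) = favg N fi (x k)"
    and A3_unbiased_g: "\<And>k. measure_pmf.expectation (D k) (\<lambda>A. gsamp gi (x k) A) = gavg N gi (x k)"
    (* (A5) *)
    and A5: "lam > 0" "\<And>k. prox_threshold (\<lambda>v. R (x k + v)) \<ge> ereal lam"
    (* hypotheses at iteration t *)
    and s_nz: "s t \<noteq> 0"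
    and \<sigma>_big: "\<sigma> t \<ge> max (2 * \<kappa>m / (1 - \<eta>2)) (1 / lam)"
  shows "x (Suc t) = x t + s t \<and> \<sigma> (Suc t) \<le> \<sigma> t"
proof -
  have "\<bar>R (x t)\<bar> \<noteq> \<infinity>"
    by (rule regulariser_finite_at_iterates[where s = s and \<xi> = \<xi> and \<sigma> = \<sigma> and fi = fi and gi = gi])
      (use A1_R(1) init(1) step update_x in auto)
  moreover have "m_model fi gi R (x t) (\<xi> t) (\<sigma> t) (s t) \<le> m_model fi gi R (x t) (\<xi> t) (\<sigma> t) 0"
    using step[of t] s_nz by blast
  \<comment> \<open>\<sigma> \<ge> 1/\<lambda> only guarantees that the model has a minimiser; here s t is assumed to be one.\<close>
  moreover have large_\<sigma>: "2 * \<kappa>m \<le> (1 - \<eta>2) * \<sigma> t"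
    using \<sigma>_big params(3) by (simp add: pos_divide_le_eq mult.commute)
  moreover have "0 < \<sigma> t"
  proof -
    have "0 < (1 - \<eta>2) * \<sigma> t" using large_\<sigma> A3_pos by linarith
    then show ?thesis using params(3) zero_less_mult_pos[of "1 - \<eta>2" "\<sigma> t"] by simp
  qed
  ultimately have very_successful: "ereal \<eta>2 \<le> rho_ratio (Fobj N fi R (x t) - Fobj N fi R (x t + s t))
      (psi_model fi gi R (x t) (\<xi> t) 0 - psi_model fi gi R (x t) (\<xi> t) (s t))"
    using rho_ratio_ge_of_model_minimiser[OF A1_R(1) _ s_nz _ A3_model[of t]] params(3) by simp
  moreover have "ereal \<eta>1 \<le> ereal \<eta>2"
    using params(2) by simp
  ultimately have "ereal \<eta>1 \<le> rho_ratio (Fobj N fi R (x t) - Fobj N fi R (x t + s t))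
      (psi_model fi gi R (x t) (\<xi> t) 0 - psi_model fi gi R (x t) (\<xi> t) (s t))"
    by (rule order_trans[rotated])
  then show ?thesis
    using update_x[of t] update_\<sigma>[of t] very_successful by (simp add: Let_def)
qed

end
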